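(* Let $\Delta\ge2$ and let $G$ be a connected graph on $n$ vertices in which every vertex has degree $\Delta$, except possibly one vertex of degree $\Delta-1$. If $n\ge 2\Delta+1$, then $G$ contains a path on $2\Delta+1$ vertices. *)

theory Defs
  imports Main
begin

definition simple_graph :: "'a set \<Rightarrow> ('a \<Rightarrow> 'a \<Rightarrow> bool) \<Rightarrow> bool" where
  "simple_graph V E \<longleftrightarrow> finite V
     \<and> (\<forall>u v. E u v \<longrightarrow> u \<in> V \<and> v \<in> V)
     \<and> (\<forall>u v. E u v \<longrightarrow> E v u)
     \<and> (\<forall>v. \<not> E v v)"

definition degree :: "'a set \<Rightarrow> ('a \<Rightarrow> 'a \<Rightarrow> bool) \<Rightarrow> 'a \<Rightarrow> nat" where
  "degree V E v = card {u \<in> V. E v u}"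

definition is_walk :: "'a set \<Rightarrow> ('a \<Rightarrow> 'a \<Rightarrow> bool) \<Rightarrow> 'a list \<Rightarrow> bool" where
  "is_walk V E xs \<longleftrightarrow> xs \<noteq> [] \<and> set xs \<subseteq> V
     \<and> (\<forall>i. Suc i < length xs \<longrightarrow> E (xs ! i) (xs ! Suc i))"

definition is_path :: "'a set \<Rightarrow> ('a \<Rightarrow> 'a \<Rightarrow> bool) \<Rightarrow> 'a list \<Rightarrow> bool" where
  "is_path V E xs \<longleftrightarrow> is_walk V E xs \<and> distinct xs"

definition connected_graph :: "'a set \<Rightarrow> ('a \<Rightarrow> 'a \<Rightarrow> bool) \<Rightarrow> bool" where
  "connected_graph V E \<longleftrightarrow> V \<noteq> {} \<and>
     (\<forall>u\<in>V. \<forall>v\<in>V. \<exists>xs. is_walk V E xs \<and> hd xs = u \<and> last xs = v)"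

end

theory Submission
  imports Defs
begin

text \<open>
  Take a longest path P; both its ends have all their neighbours on P. If the end degrees sum
  to at least |P|, some neighbour of the first end directly follows a neighbour of the last end
  on P, and a Posa rotation at that pair closes P into a cycle on the same vertex set. If that
  cycle missed a vertex, connectivity would give an edge leaving it and hence a longer path;
  so P spans the graph and |P| = n \<ge> 2\<Delta> + 1.

  At most one end of P is the deficient vertex w, so the end degrees sum to at least 2\<Delta> - 1.
  The only bad case is |P| = 2\<Delta> with w of degree \<Delta> - 1 at an end. For \<Delta> \<ge> 3, w has a
  neighbour on P other than its successor, and rotating at it moves w off the end. For \<Delta> = 2,
  P has four vertices a, b, c, d with deg a = 1; then d is adjacent to b and c, giving b
  degree 3.
\<close>

lemma is_walk_iff: "is_walk V E xs \<longleftrightarrow> xs \<noteq> [] \<and> set xs \<subseteq> V \<and> successively E xs"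
  unfolding is_walk_def successively_conv_nth by blast

lemma is_path_iff:
  "is_path V E xs \<longleftrightarrow> xs \<noteq> [] \<and> set xs \<subseteq> V \<and> successively E xs \<and> distinct xs"
  unfolding is_path_def is_walk_iff by blast

lemma is_path_hd_eq_last: "is_path V E xs \<Longrightarrow> hd xs = last xs \<Longrightarrow> length xs = 1"
  unfolding is_path_iff by (cases xs) (auto split: if_splits)

lemma is_path_take: "is_path V E xs \<Longrightarrow> 0 < n \<Longrightarrow> is_path V E (take n xs)"
  unfolding is_path_iff
  by (metis append_take_drop_id successively_append_iff set_take_subset distinct_take
       order_trans take_eq_Nil not_gr0)

lemma successively_edge_leaving:
  assumes "successively E ws" "ws \<noteq> []" "hd ws \<in> S" "last ws \<notin> S"
  shows "\<exists>x\<in>S. \<exists>y. y \<notin> S \<and> E x y"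
  using assms
proof (induction ws rule: induct_list012)
  case (3 a b ws)
  then show ?case by (cases "b \<in> S") auto
qed auto

definition posa_rotation :: "nat \<Rightarrow> 'a list \<Rightarrow> 'a list" where
  "posa_rotation j xs = rev (take j xs) @ drop j xs"

lemma length_posa_rotation [simp]: "length (posa_rotation j xs) = length xs"
  unfolding posa_rotation_def by simp

lemma set_posa_rotation [simp]: "set (posa_rotation j xs) = set xs"
  unfolding posa_rotation_def by (metis append_take_drop_id set_append set_rev)

lemma hd_posa_rotation: "0 < j \<Longrightarrow> j \<le> length xs \<Longrightarrow> hd (posa_rotation j xs) = xs ! (j - 1)"
  unfolding posa_rotation_def by (auto simp: hd_append hd_rev last_conv_nth min_def)

lemma last_posa_rotation: "j < length xs \<Longrightarrow> last (posa_rotation j xs) = last xs"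
  unfolding posa_rotation_def by simp

definition is_longest_path :: "'a set \<Rightarrow> ('a \<Rightarrow> 'a \<Rightarrow> bool) \<Rightarrow> 'a list \<Rightarrow> bool" where
  "is_longest_path V E xs \<longleftrightarrow> is_path V E xs \<and> (\<forall>ys. is_path V E ys \<longrightarrow> length ys \<le> length xs)"

lemma is_longest_path_length_eq:
  "is_longest_path V E xs \<Longrightarrow> is_longest_path V E ys \<Longrightarrow> length ys = length xs"
  unfolding is_longest_path_def by (simp add: le_antisym)

lemma degree_le_card_if_neighbours_in_image:
  "{u \<in> V. E v u} \<subseteq> f ` A \<Longrightarrow> finite A \<Longrightarrow> degree V E v \<le> card A"
  unfolding degree_def by (meson card_image_le card_mono finite_imageI order_trans)

context
  fixes V :: "'a set" and E :: "'a \<Rightarrow> 'a \<Rightarrow> bool"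
  assumes graph: "simple_graph V E"
begin

lemma edge_sym: "E u v \<Longrightarrow> E v u"
  using graph unfolding simple_graph_def by blast

lemma edge_irrefl: "\<not> E u u"
  using graph unfolding simple_graph_def by blast

lemma edge_in_V: "E u v \<Longrightarrow> u \<in> V \<and> v \<in> V"
  using graph unfolding simple_graph_def by blast

lemma is_path_rev: "is_path V E xs \<Longrightarrow> is_path V E (rev xs)"
  unfolding is_path_iff by (auto elim: successively_mono intro: edge_sym)

lemma length_le_card_if_is_path: "is_path V E xs \<Longrightarrow> length xs \<le> card V"
  using graph unfolding is_path_iff simple_graph_def by (metis card_mono distinct_card)

lemma is_path_posa_rotation:
  assumes p: "is_path V E xs" and j: "0 < j" "j < length xs" and e: "E (hd xs) (xs ! j)"
  shows "is_path V E (posa_rotation j xs)"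
proof -
  have s: "successively E xs" "distinct xs" "set xs \<subseteq> V"
    using p unfolding is_path_iff by auto
  have st: "successively E (take j xs)" "successively E (drop j xs)"
    using s(1) by (metis append_take_drop_id successively_append_iff)+
  have "successively E (rev (take j xs))"
    using st(1) by (auto elim: successively_mono intro: edge_sym)
  moreover have "E (last (rev (take j xs))) (hd (drop j xs))"
    using e j by (simp add: last_rev hd_drop_conv_nth)
  ultimately have "successively E (posa_rotation j xs)"
    using st(2) unfolding posa_rotation_def successively_append_iff by simp
  moreover have "distinct (posa_rotation j xs)"
    using s(2) unfolding posa_rotation_def
    by (metis append_take_drop_id distinct_append distinct_rev set_rev)
  ultimately show ?thesis
    using s(3) j unfolding is_path_iff by (auto simp flip: length_greater_0_conv)
qed

lemma longest_path_exists: "V \<noteq> {} \<Longrightarrow> \<exists>xs. is_longest_path V E xs"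
proof -
  assume "V \<noteq> {}"
  then obtain v where "is_path V E [v]" unfolding is_path_iff by auto
  then show ?thesis
    using ex_has_greatest_nat[of "is_path V E" "[v]" length "Suc (card V)"]
      length_le_card_if_is_path unfolding is_longest_path_def by (meson le_imp_less_Suc)
qed

lemma is_longest_path_rev: "is_longest_path V E xs \<Longrightarrow> is_longest_path V E (rev xs)"
  unfolding is_longest_path_def using is_path_rev by simp

lemma neighbour_of_hd_in_longest_path:
  assumes p: "is_longest_path V E xs" and e: "E (hd xs) u"
  shows "u \<in> set xs"
proof (rule ccontr)
  assume "u \<notin> set xs"
  with p e have "is_path V E (u # xs)"
    unfolding is_longest_path_def is_path_iff
    by (auto simp: successively_Cons intro: edge_sym dest: edge_in_V)
  with p show False unfolding is_longest_path_def by fastforce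
qed

lemma neighbour_of_last_in_longest_path:
  "is_longest_path V E xs \<Longrightarrow> E (last xs) u \<Longrightarrow> u \<in> set xs"
  using neighbour_of_hd_in_longest_path[OF is_longest_path_rev] by (simp add: hd_rev)

lemma longest_path_crossing_edges:
  assumes p: "is_longest_path V E xs"
    and d: "length xs \<le> degree V E (hd xs) + degree V E (last xs)"
  shows "\<exists>i. Suc i < length xs \<and> E (hd xs) (xs ! Suc i) \<and> E (last xs) (xs ! i)"
proof (rule ccontr)
  assume none: "\<not> ?thesis"
  have ne: "xs \<noteq> []" using p unfolding is_longest_path_def is_path_iff by simp
  define A where "A = {i. Suc i < length xs \<and> E (hd xs) (xs ! Suc i)}"
  define B where "B = {i. Suc i < length xs \<and> E (last xs) (xs ! i)}"
  have AB: "A \<union> B \<subseteq> {..<length xs - 1}" unfolding A_def B_def by auto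
  then have fin: "finite A" "finite B" by (auto intro: finite_subset)
  have "{u \<in> V. E (hd xs) u} \<subseteq> (\<lambda>i. xs ! Suc i) ` A"
  proof
    fix u assume u: "u \<in> {u \<in> V. E (hd xs) u}"
    then obtain k where k: "k < length xs" "u = xs ! k"
      using neighbour_of_hd_in_longest_path[OF p] by (auto simp: in_set_conv_nth)
    moreover have "k \<noteq> 0" using u k ne edge_irrefl by (metis hd_conv_nth mem_Collect_eq)
    ultimately show "u \<in> (\<lambda>i. xs ! Suc i) ` A"
      using u unfolding A_def by (auto simp: image_iff gr0_conv_Suc)
  qed
  then have "degree V E (hd xs) \<le> card A" using fin(1) by (rule degree_le_card_if_neighbours_in_image)
  moreover have "{u \<in> V. E (last xs) u} \<subseteq> (!) xs ` B"
  proof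
    fix u assume u: "u \<in> {u \<in> V. E (last xs) u}"
    then obtain k where k: "k < length xs" "u = xs ! k"
      using neighbour_of_last_in_longest_path[OF p] by (auto simp: in_set_conv_nth)
    moreover have "k \<noteq> length xs - 1" using u k ne edge_irrefl by (metis last_conv_nth mem_Collect_eq)
    ultimately show "u \<in> (!) xs ` B" using u unfolding B_def by force
  qed
  then have "degree V E (last xs) \<le> card B" using fin(2) by (rule degree_le_card_if_neighbours_in_image)
  moreover have "A \<inter> B = {}" using none unfolding A_def B_def by auto
  then have "card A + card B \<le> length xs - 1"
    using AB fin by (metis card_Un_disjoint card_lessThan card_mono finite_lessThan)
  moreover have "0 < length xs" using ne by simp
  ultimately show False using d by linarith
qed

lemma longer_path_from_cycle:
  assumes c: "connected_graph V E" and p: "is_path V E zs"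
    and cyc: "E (last zs) (hd zs)" and ne: "set zs \<noteq> V"
  shows "\<exists>q. is_path V E q \<and> length q = Suc (length zs)"
proof -
  have s: "zs \<noteq> []" "set zs \<subseteq> V" "successively E zs" "distinct zs"
    using p unfolding is_path_iff by auto
  obtain a where a: "a \<in> V" "a \<notin> set zs" using ne s(2) by blast
  obtain ws where ws: "is_walk V E ws" "hd ws = hd zs" "last ws = a"
    using c a s(1,2) unfolding connected_graph_def by (meson hd_in_set subsetD)
  obtain v u where vu: "v \<in> set zs" "u \<notin> set zs" "E v u"
    using successively_edge_leaving[of E ws "set zs"] ws a s(1) unfolding is_walk_iff by auto
  obtain as bs where zs: "zs = as @ v # bs" using vu(1) split_list by metis
  \<comment> \<open>The new path is u followed by the whole cycle, starting at v.\<close>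
  have "successively E (v # bs)" "successively E as"
    using s(3) unfolding zs successively_append_iff by auto
  moreover have "as \<noteq> [] \<Longrightarrow> E (last (v # bs)) (hd as)"
    using cyc unfolding zs by (auto simp: last_append)
  ultimately have "successively E ((v # bs) @ as)" unfolding successively_append_iff by blast
  then have "successively E (u # (v # bs) @ as)" using edge_sym[OF vu(3)] by simp
  moreover have "distinct (u # (v # bs) @ as)" using s(4) vu(2) unfolding zs by auto
  moreover have "set (u # (v # bs) @ as) \<subseteq> V" using s(2) edge_in_V[OF vu(3)] unfolding zs by auto
  ultimately show ?thesis unfolding is_path_iff by (intro exI[of _ "u # (v # bs) @ as"]) (simp add: zs)
qed

lemma longest_path_spans:
  assumes c: "connected_graph V E" and p: "is_longest_path V E xs"
    and d: "length xs \<le> degree V E (hd xs) + degree V E (last xs)"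
  shows "set xs = V"
proof (rule ccontr)
  assume ne: "set xs \<noteq> V"
  obtain i where i: "Suc i < length xs" "E (hd xs) (xs ! Suc i)" "E (last xs) (xs ! i)"
    using longest_path_crossing_edges[OF p d] by blast
  let ?zs = "posa_rotation (Suc i) xs"
  have "is_path V E ?zs"
    using p i(1,2) by (intro is_path_posa_rotation) (simp_all add: is_longest_path_def)
  moreover have "E (last ?zs) (hd ?zs)" using i by (simp add: hd_posa_rotation last_posa_rotation)
  moreover have "set ?zs \<noteq> V" using ne by simp
  ultimately obtain q where "is_path V E q" "length q = Suc (length xs)"
    using longer_path_from_cycle[OF c] by (metis length_posa_rotation)
  with p show False unfolding is_longest_path_def by fastforce
qed

lemma longest_path_rotate_hd:
  assumes p: "is_longest_path V E xs" and u: "E (hd xs) u" "u \<noteq> xs ! 1"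
  shows "\<exists>ys. is_longest_path V E ys \<and> hd ys \<noteq> hd xs \<and> last ys = last xs"
proof -
  have pth: "is_path V E xs" and dist: "distinct xs" and ne: "xs \<noteq> []"
    using p unfolding is_longest_path_def is_path_iff by auto
  obtain j where j: "j < length xs" "xs ! j = u"
    using neighbour_of_hd_in_longest_path[OF p u(1)] by (auto simp: in_set_conv_nth)
  have "j \<noteq> 0" using j u(1) ne edge_irrefl by (metis hd_conv_nth)
  moreover have "j \<noteq> 1" using j u(2) by auto
  ultimately have j2: "2 \<le> j" by linarith
  let ?ys = "posa_rotation j xs"
  have "is_path V E ?ys" using pth j u(1) j2 by (intro is_path_posa_rotation) auto
  then have "is_longest_path V E ?ys" using p unfolding is_longest_path_def by simp
  moreover have "hd ?ys \<noteq> hd xs"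
    using j j2 dist ne by (simp add: hd_posa_rotation hd_conv_nth nth_eq_iff_index_eq)
  moreover have "last ?ys = last xs" using j by (simp add: last_posa_rotation)
  ultimately show ?thesis by blast
qed

lemma no_longest_4_path_with_degrees_1_2_2:
  assumes p: "is_longest_path V E [a, b, c, d]"
    and deg: "degree V E a = 1" "degree V E b = 2" "degree V E d = 2"
  shows False
proof -
  have dist: "distinct [a, b, c, d]" and in_V: "{a, b, c, d} \<subseteq> V"
    and ab: "E a b" and bc: "E b c"
    using p unfolding is_longest_path_def is_path_iff by auto
  have fin: "finite V" using graph unfolding simple_graph_def by blast
  obtain x where "{u \<in> V. E a u} = {x}" using deg(1) unfolding degree_def by (rule card_1_singletonE)
  moreover have "b \<in> {u \<in> V. E a u}" using ab in_V by simp
  ultimately have Na: "{u \<in> V. E a u} = {b}" by simp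
  have "{u \<in> V. E d u} \<subseteq> {b, c}"
  proof
    fix u assume u: "u \<in> {u \<in> V. E d u}"
    then have "u \<in> {a, b, c, d}" using neighbour_of_last_in_longest_path[OF p] by simp
    moreover have "u \<noteq> d" using u edge_irrefl by auto
    moreover have "u \<noteq> a"
    proof
      assume "u = a"
      then have "d \<in> {u \<in> V. E a u}" using u in_V edge_sym by auto
      then show False using Na dist by simp
    qed
    ultimately show "u \<in> {b, c}" by blast
  qed
  moreover have "card {b, c} \<le> card {u \<in> V. E d u}" using deg(3) dist unfolding degree_def by simp
  ultimately have "{u \<in> V. E d u} = {b, c}" by (intro card_seteq) simp_all
  then have "{a, c, d} \<subseteq> {u \<in> V. E b u}" using ab bc in_V edge_sym by auto
  then have "card {a, c, d} \<le> degree V E b" unfolding degree_def using fin by (simp add: card_mono)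
  then show False using deg(2) dist by simp
qed

lemma longest_path_ends_avoid_deficient_vertex:
  assumes D: "2 \<le> \<Delta>" and hw: "\<forall>v\<in>V. v \<noteq> w \<longrightarrow> degree V E v = \<Delta>"
    and dw: "degree V E w = \<Delta> - 1"
    and p: "is_longest_path V E xs" and len: "length xs = 2 * \<Delta>"
  shows "\<exists>ys. is_longest_path V E ys \<and> hd ys \<noteq> w \<and> last ys \<noteq> w"
proof -
  have from_hd: "\<exists>ys. is_longest_path V E ys \<and> hd ys \<noteq> w \<and> last ys \<noteq> w"
    if zs: "is_longest_path V E zs" "length zs = 2 * \<Delta>" "hd zs = w" for zs
  proof -
    have pth: "is_path V E zs" using zs(1) unfolding is_longest_path_def by simp
    have last_zs: "last zs \<noteq> w" using is_path_hd_eq_last[OF pth] zs(2,3) D by auto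
    show ?thesis
    proof (cases "\<Delta> = 2")
      case False
      have "\<not> {u \<in> V. E w u} \<subseteq> {zs ! 1}"
        using dw D False card_mono[of "{zs ! 1}" "{u \<in> V. E w u}"] unfolding degree_def by auto
      then obtain u where "E (hd zs) u" "u \<noteq> zs ! 1" using zs(3) by blast
      then show ?thesis using longest_path_rotate_hd[OF zs(1)] zs(3) last_zs by metis
    next
      case True
      then obtain a b c d where abcd: "zs = [a, b, c, d]"
        using zs(2) by (auto simp: numeral_eq_Suc length_Suc_conv)
      have "distinct zs" "set zs \<subseteq> V" using pth unfolding is_path_iff by auto
      then have "degree V E a = 1" "degree V E b = 2" "degree V E d = 2"
        using hw dw zs(3) True unfolding abcd by auto
      then show ?thesis using no_longest_4_path_with_degrees_1_2_2 zs(1) unfolding abcd by blast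
    qed
  qed
  consider "hd xs = w" | "last xs = w" | "hd xs \<noteq> w" "last xs \<noteq> w" by blast
  then show ?thesis
  proof cases
    case 1
    then show ?thesis using from_hd p len by blast
  next
    case 2
    then show ?thesis using from_hd[OF is_longest_path_rev[OF p]] p len
      unfolding is_longest_path_def by (auto simp: hd_rev last_rev)
  qed (use p in blast)
qed

lemma longest_path_with_end_degree_sum:
  assumes D: "2 \<le> \<Delta>" and hw: "\<forall>v\<in>V. v \<noteq> w \<longrightarrow> degree V E v = \<Delta>"
    and dg: "\<forall>v\<in>V. degree V E v = \<Delta> \<or> degree V E v = \<Delta> - 1"
    and p: "is_longest_path V E xs" and len: "length xs \<le> 2 * \<Delta>"
  shows "\<exists>ys. is_longest_path V E ys \<and> length ys \<le> degree V E (hd ys) + degree V E (last ys)"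
proof -
  have ends: "hd ys \<in> V" "last ys \<in> V" if "is_longest_path V E ys" for ys
    using that unfolding is_longest_path_def is_path_iff by auto
  show ?thesis
  proof (cases "w \<in> V \<and> degree V E w = \<Delta> - 1 \<and> length xs = 2 * \<Delta>")
    case True
    then obtain ys where ys: "is_longest_path V E ys" "hd ys \<noteq> w" "last ys \<noteq> w"
      using longest_path_ends_avoid_deficient_vertex[OF D hw _ p] by blast
    moreover have "length ys = 2 * \<Delta>" using is_longest_path_length_eq[OF p ys(1)] True by simp
    ultimately show ?thesis using ends[OF ys(1)] hw by auto
  next
    case False
    have low: "length xs - \<Delta> \<le> degree V E v" if "v \<in> V" for v
    proof -
      have "degree V E v = \<Delta> \<or> degree V E v = \<Delta> - 1 \<and> length xs \<noteq> 2 * \<Delta>"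
        using dg hw that False by (cases "v = w") auto
      then show ?thesis using len by (elim disjE conjE) linarith+
    qed
    have "length xs \<le> degree V E (hd xs) + degree V E (last xs)"
    proof (cases "hd xs = last xs")
      case True
      then have "length xs = 1" using p is_path_hd_eq_last unfolding is_longest_path_def by blast
      moreover have "degree V E (hd xs) = \<Delta> \<or> degree V E (hd xs) = \<Delta> - 1"
        using dg ends[OF p] by blast
      ultimately show ?thesis using D by (elim disjE) linarith+
    next
      case False
      then have "degree V E (hd xs) = \<Delta> \<or> degree V E (last xs) = \<Delta>"
        using hw ends[OF p] by (cases "hd xs = w") auto
      moreover have "length xs - \<Delta> \<le> degree V E (hd xs)" "length xs - \<Delta> \<le> degree V E (last xs)"
        using low ends[OF p] by auto
      ultimately show ?thesis by (elim disjE) linarith+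
    qed
    then show ?thesis using p by blast
  qed
qed

end

theorem lemma3p2:
  fixes V :: "'a set" and E :: "'a \<Rightarrow> 'a \<Rightarrow> bool" and \<Delta> :: nat
  assumes "simple_graph V E"
    and "connected_graph V E"
    and "\<Delta> \<ge> 2"
    and "\<exists>w\<in>V. \<forall>v\<in>V. v \<noteq> w \<longrightarrow> degree V E v = \<Delta>"
    and "\<forall>v\<in>V. degree V E v = \<Delta> \<or> degree V E v = \<Delta> - 1"
    and "card V \<ge> 2 * \<Delta> + 1"
  shows "\<exists>xs. is_path V E xs \<and> length xs = 2 * \<Delta> + 1"
proof -
  obtain w where "w \<in> V" and hw: "\<forall>v\<in>V. v \<noteq> w \<longrightarrow> degree V E v = \<Delta>"
    using assms(4) by blast
  then obtain xs where p: "is_longest_path V E xs"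
    using longest_path_exists[OF assms(1)] by blast
  have "2 * \<Delta> + 1 \<le> length xs"
  proof (rule ccontr)
    assume short: "\<not> 2 * \<Delta> + 1 \<le> length xs"
    then obtain ys where ys: "is_longest_path V E ys"
      and "length ys \<le> degree V E (hd ys) + degree V E (last ys)"
      using longest_path_with_end_degree_sum[OF assms(1,3) hw assms(5) p] by auto
    then have "set ys = V" using longest_path_spans[OF assms(1,2)] by blast
    then have "card V = length ys"
      using ys unfolding is_longest_path_def is_path_iff by (metis distinct_card)
    then show False using short assms(6) is_longest_path_length_eq[OF p ys] by simp
  qed
  then show ?thesis
    using p is_path_take[of V E xs "2 * \<Delta> + 1"] unfolding is_longest_path_def by auto
qed

end
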